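(* If $n$ is a positive integer, then \[ \sum_{k=1}^\infty\frac{\zeta(2k)}{k(k+n)} = -\frac{1}{2n^2}+\frac{\ln(2\pi)}{n}-2(2n-1)!\sum_{j=1}^{n-1}\frac{(-1)^j\zeta(2j+1)}{(2\pi)^{2j}(2n-2j)!}, \] \[ \sum_{k=1}^\infty\frac{\zeta(2k)}{k(2k+2n-1)} = -\frac{1}{(2n-1)^2}+\frac{\ln(2\pi)}{2n-1}-(2n-2)!\sum_{j=1}^{n-1}\frac{(-1)^j\zeta(2j+1)}{(2\pi)^{2j}(2n-2j-1)!}. \]
   Context: $\zeta$ denotes the Riemann zeta function; empty sums equal $0$. *)

theory Defs
  imports "HOL-Analysis.Analysis"
begin

text \<open>Riemann zeta function on the half-line s > 1, given by its Dirichlet series.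
  The statement only uses zeta at integers s \<ge> 2, where this is the standard definition.\<close>
definition zeta :: "real \<Rightarrow> real" where
  "zeta s = (\<Sum>m. 1 / (real (Suc m)) powr s)"

end

theory Submission
  imports Defs "HOL-Real_Asymp.Real_Asymp"
begin

(*
  Taking logarithms in Euler's product for the sine gives, for 0 < y < 1,
  \<Sum>k. zeta (2k) y^(2k) / k = ln (2\<pi>y) - ln (2 sin (\<pi>y)).
  Multiplying by y^m and integrating over [0, 1] turns the left-hand side into
  \<Sum>k. zeta (2k) / (k (2k + m + 1)).  On the right, the integral of y^m ln (2\<pi>y) is
  elementary, and the integral of y^m ln (2 sin (\<pi>y)) is computed by m-fold integration by
  parts against the 1-periodic iterated primitives
  G_i (y) = - (2\<pi>)^(-i) \<Sum>k. cos (2\<pi>ky - i\<pi>/2) / k^(i+1)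
  of ln (2 sin (\<pi>y)) = - \<Sum>k. cos (2\<pi>ky) / k.  Their boundary values
  G_i (0) = G_i (1) = - cos (i\<pi>/2) zeta (i + 1) / (2\<pi>)^i vanish for odd i, which leaves the odd
  zeta values.  The two identities are the cases m = 2n - 1 and m = 2n - 2.
*)

section \<open>Zeta values at positive integers\<close>

lemma zeta_of_nat_sums:
  assumes "j \<ge> 2"
  shows "(\<lambda>k. 1 / real (Suc k) ^ j) sums zeta (real j)"
proof -
  have "summable (\<lambda>k. inverse (real k ^ j))"
    by (rule inverse_power_summable) (use assms in auto)
  then have "summable (\<lambda>k. 1 / real (Suc k) ^ j)"
    by (subst (asm) summable_Suc_iff[symmetric]) (simp add: inverse_eq_divide)
  moreover have "zeta (real j) = (\<Sum>k. 1 / real (Suc k) ^ j)"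
    unfolding zeta_def by (simp add: powr_realpow)
  ultimately show ?thesis by (simp add: sums_iff)
qed

lemma summable_inverse_Suc_power: "j \<ge> 2 \<Longrightarrow> summable (\<lambda>k. 1 / real (Suc k) ^ j)"
  using zeta_of_nat_sums sums_summable by blast

lemma zeta_of_nat_nonneg: "j \<ge> 2 \<Longrightarrow> 0 \<le> zeta (real j)"
  by (rule sums_le[OF _ sums_zero zeta_of_nat_sums]) auto

lemma zeta_of_nat_antimono:
  assumes "2 \<le> i" "i \<le> j"
  shows "zeta (real j) \<le> zeta (real i)"
proof (rule sums_le[OF _ zeta_of_nat_sums zeta_of_nat_sums])
  show "1 / real (Suc k) ^ j \<le> 1 / real (Suc k) ^ i" for k
    using assms by (intro divide_left_mono power_increasing) auto
qed (use assms in auto)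

lemma has_field_derivative_uniform_limit:
  fixes f :: "nat \<Rightarrow> 'a::{real_normed_field,banach} \<Rightarrow> 'a"
  assumes "convex S"
    and der: "\<And>n x. x \<in> S \<Longrightarrow> (f n has_field_derivative f' n x) (at x within S)"
    and unif: "uniform_limit S f' g' sequentially"
    and lim: "\<And>x. x \<in> S \<Longrightarrow> (\<lambda>n. f n x) \<longlonglongrightarrow> g x"
    and "x \<in> S"
  shows "(g has_field_derivative g' x) (at x within S)"
proof -
  have nle: "\<forall>\<^sub>F n in sequentially. \<forall>x\<in>S. \<forall>h. norm (f' n x * h - g' x * h) \<le> e * norm h"
    if "e > 0" for e
    using uniform_limitD[OF unif that]
  proof eventually_elim
    case (elim n)
    show ?case
    proof (intro ballI allI)
      fix x h :: 'a
      assume "x \<in> S"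
      with elim have "norm (f' n x - g' x) * norm h \<le> e * norm h"
        by (intro mult_right_mono) (auto simp: dist_norm)
      then show "norm (f' n x * h - g' x * h) \<le> e * norm h"
        by (simp add: norm_mult [symmetric] left_diff_distrib)
    qed
  qed
  have "\<exists>g2. \<forall>x\<in>S. (\<lambda>n. f n x) \<longlonglongrightarrow> g2 x \<and> (g2 has_derivative (*) (g' x)) (at x within S)"
    using der nle unfolding has_field_derivative_def
    by (rule has_derivative_sequence[where f = f and f' = "\<lambda>n x. (*) (f' n x)" and g' = "\<lambda>x. (*) (g' x)",
          OF \<open>convex S\<close> _ _ \<open>x \<in> S\<close> lim[OF \<open>x \<in> S\<close>]])
  then obtain g2 where g2: "\<And>x. x \<in> S \<Longrightarrow> (\<lambda>n. f n x) \<longlonglongrightarrow> g2 x \<and> (g2 has_derivative (*) (g' x)) (at x within S)"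
    by blast
  have "g x' = g2 x'" if "x' \<in> S" for x'
    using g2[OF that] lim[OF that] LIMSEQ_unique by blast
  then have "(g has_derivative (*) (g' x)) (at x within S)"
    by (rule has_derivative_transform[OF \<open>x \<in> S\<close> _ conjunct2[OF g2[OF \<open>x \<in> S\<close>]]])
  then show ?thesis
    by (simp add: has_field_derivative_def)
qed

lemma has_real_derivative_suminf:
  fixes f f' :: "nat \<Rightarrow> real \<Rightarrow> real"
  assumes "\<And>k x. (f k has_real_derivative f' k x) (at x)"
    and "\<And>k x. \<bar>f' k x\<bar> \<le> M k" "summable M"
    and "summable (\<lambda>k. f k 0)"
  shows "((\<lambda>x. \<Sum>k. f k x) has_real_derivative (\<Sum>k. f' k x)) (at x)"
proof -
  have "uniformly_convergent_on UNIV (\<lambda>n x. \<Sum>k<n. f' k x)"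
    using assms(2,3) by (intro Weierstrass_m_test') auto
  then show ?thesis
    using assms(1,4) by (intro has_field_derivative_series'(2)[of UNIV f f' 0]) (auto intro: has_field_derivative_at_within)
qed

lemma sums_swap_nonneg:
  fixes f :: "nat \<Rightarrow> nat \<Rightarrow> real"
  assumes nonneg: "\<And>m k. f m k \<ge> 0"
    and rows: "\<And>m. (\<lambda>k. f m k) sums g m" and "g sums S"
    and cols: "\<And>k. (\<lambda>m. f m k) sums h k"
  shows "h sums S"
proof -
  have "g m \<ge> 0" for m
    by (rule sums_le[OF _ sums_zero rows]) (use nonneg in auto)
  then have G: "(g has_sum S) UNIV"
    by (rule sums_nonneg_imp_has_sum[OF \<open>g sums S\<close>])
  have rows': "((\<lambda>k. f m k) has_sum g m) UNIV" for m
    by (rule sums_nonneg_imp_has_sum[OF rows nonneg])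
  have cols': "((\<lambda>m. f m k) has_sum h k) UNIV" for k
    by (rule sums_nonneg_imp_has_sum[OF cols nonneg])
  have "(\<lambda>(m, k). f m k) summable_on Sigma UNIV (\<lambda>_. UNIV)"
    by (rule summable_on_SigmaI[where g = g]) (use rows' G nonneg in \<open>auto simp: has_sum_imp_summable\<close>)
  then have "((\<lambda>(m, k). f m k) has_sum S) (Sigma UNIV (\<lambda>_. UNIV))"
    by (intro has_sum_SigmaI[where g = g]) (use rows' G in auto)
  then have "((\<lambda>(x, y). (\<lambda>(m, k). f m k) (y, x)) has_sum S) (UNIV \<times> UNIV)"
    using has_sum_swap by blast
  then have "((\<lambda>(k, m). f m k) has_sum S) (Sigma UNIV (\<lambda>_. UNIV))"
    by (simp add: case_prod_unfold)
  then have "(h has_sum S) UNIV"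
    by (rule has_sum_SigmaD) (use cols' in auto)
  then show ?thesis
    by (rule has_sum_imp_sums)
qed

lemma continuous_on_sparse_powser:
  fixes a :: "nat \<Rightarrow> real" and e :: "nat \<Rightarrow> nat"
  assumes "summable (\<lambda>n. \<bar>a n\<bar>)"
  shows "continuous_on {-1..1} (\<lambda>x. \<Sum>n. a n * x ^ e n)"
proof -
  have "uniform_limit {-1..1} (\<lambda>n x. \<Sum>k<n. a k * x ^ e k) (\<lambda>x. \<Sum>n. a n * x ^ e n) sequentially"
  proof (rule Weierstrass_m_test[OF _ assms])
    fix n and x :: real
    assume "x \<in> {-1..1}"
    then have "\<bar>a n\<bar> * \<bar>x\<bar> ^ e n \<le> \<bar>a n\<bar> * 1"
      by (intro mult_left_mono power_le_one) auto
    then show "norm (a n * x ^ e n) \<le> \<bar>a n\<bar>"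
      by (simp add: abs_mult power_abs)
  qed
  then show ?thesis
    by (rule uniform_limit_theorem[rotated]) (auto intro!: always_eventually continuous_intros)
qed

lemma has_real_derivative_sparse_powser:
  fixes a :: "nat \<Rightarrow> real" and e :: "nat \<Rightarrow> nat"
  assumes bound: "\<And>n. \<bar>a n * real (e n)\<bar> \<le> B" and gap: "\<And>n. n < e n" and y: "\<bar>y\<bar> < 1"
  shows "((\<lambda>x. \<Sum>n. a n * x ^ e n) has_real_derivative (\<Sum>n. a n * real (e n) * y ^ (e n - 1))) (at y)"
proof -
  define t where "t = (1 + \<bar>y\<bar>) / 2"
  have t: "\<bar>y\<bar> < t" "t < 1"
    using y by (auto simp: t_def)
  have "((\<lambda>x. a n * x ^ e n) has_field_derivative a n * real (e n) * x ^ (e n - 1)) (at x within {-t..t})" for n x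
    by (auto intro!: derivative_eq_intros)
  moreover have "uniformly_convergent_on {-t..t} (\<lambda>n x. \<Sum>k<n. a k * real (e k) * x ^ (e k - 1))"
  proof (rule Weierstrass_m_test'[where M = "\<lambda>n. B * t ^ n"])
    fix n and x :: real
    assume "x \<in> {-t..t}"
    then have "\<bar>x\<bar> ^ (e n - 1) \<le> t ^ (e n - 1)"
      by (intro power_mono) auto
    also have "\<dots> \<le> t ^ n"
      using gap[of n] t y by (intro power_decreasing) auto
    finally have "\<bar>a n * real (e n)\<bar> * \<bar>x\<bar> ^ (e n - 1) \<le> B * t ^ n"
      using bound[of n] t y by (intro mult_mono) auto
    then show "norm (a n * real (e n) * x ^ (e n - 1)) \<le> B * t ^ n"
      by (simp add: abs_mult power_abs)
  next
    show "summable (\<lambda>n. B * t ^ n)"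
      using t y by (intro summable_mult summable_geometric) auto
  qed
  moreover have "(\<lambda>n. a n * 0 ^ e n) = (\<lambda>_. 0)"
  proof
    show "a n * 0 ^ e n = 0" for n
      using gap[of n] by simp
  qed
  then have "summable (\<lambda>n. a n * 0 ^ e n)"
    by simp
  ultimately show ?thesis
    using t by (intro has_field_derivative_series'(2)[of "{-t..t}" _ _ 0]) auto
qed

lemma abs_ln_diff_le:
  fixes a b :: real
  assumes "a > 0" "b > 0"
  shows "\<bar>ln a - ln b\<bar> \<le> \<bar>a - b\<bar> / min a b"
proof -
  have "ln v - ln u \<le> (v - u) / u" if "0 < u" "u \<le> v" for u v :: real
  proof -
    have "ln v - ln u = ln (v / u)" using that by (simp add: ln_div)
    also have "\<dots> \<le> v / u - 1" using that by (intro ln_le_minus_one) auto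
    finally show ?thesis using that by (simp add: field_simps)
  qed
  from this[of a b] this[of b a] assms show ?thesis
    by (cases "a \<le> b") (auto simp: min_def)
qed

section \<open>Logarithmic series\<close>

lemma cos_series_sums_ln_norm:
  assumes "0 \<le> r" "r < 1"
  shows "(\<lambda>k. r ^ Suc k * cos (real (Suc k) * t) / real (Suc k)) sums - ln (cmod (1 - rcis r t))"
proof -
  have "(\<lambda>k. - ((- (- rcis r t)) ^ k) / of_nat k) sums ln (1 + - rcis r t)"
    by (rule Ln_series') (use assms in simp)
  then have "(\<lambda>k. rcis r t ^ k / of_nat k) sums - ln (1 - rcis r t)"
    using sums_minus by fastforce
  then have "(\<lambda>k. Re (rcis r t ^ k / of_nat k)) sums Re (- ln (1 - rcis r t))"
    by (rule sums_Re)
  moreover have "1 - rcis r t \<noteq> 0"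
    using assms by (metis complex_mod_rcis abs_of_nonneg less_irrefl right_minus_eq norm_one)
  ultimately have "(\<lambda>k. r ^ k * cos (real k * t) / real k) sums - ln (cmod (1 - rcis r t))"
    by (simp add: DeMoivre2)
  then show ?thesis
    using sums_Suc_iff[of "\<lambda>k. r ^ k * cos (real k * t) / real k"] by simp
qed

lemma ln_one_minus_sums:
  assumes "0 \<le> t" "t < 1"
  shows "(\<lambda>k. t ^ Suc k / real (Suc k)) sums - ln (1 - t)"
proof -
  have "cmod (1 - rcis t 0) = 1 - t"
  proof -
    have "1 - rcis t 0 = of_real (1 - t)"
      by simp
    then show ?thesis
      using assms by (simp only: norm_of_real)
  qed
  then show ?thesis
    using cos_series_sums_ln_norm[OF assms, of 0] by simp
qed

lemma norm_one_minus_cis_double: "cmod (1 - cis (2 * x)) = 2 * \<bar>sin x\<bar>"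
proof -
  have "1 - cis (2 * x) = - 2 * \<i> * sin x * cis x"
    using cos_double_sin[of x] sin_double[of x] by (simp add: complex_eq_iff power2_eq_square algebra_simps)
  then show ?thesis
    by (simp add: norm_mult)
qed

lemma abs_ln_norm_one_minus_mult_le:
  fixes w :: complex
  assumes "norm w = 1" "0 < d" "d \<le> norm (1 - w)" "0 \<le> r" "r \<le> 1" "1 - r \<le> d / 2"
  shows "\<bar>ln (norm (1 - of_real r * w)) - ln (norm (1 - w))\<bar> \<le> 2 * (1 - r) / d"
proof -
  have "\<bar>norm (1 - of_real r * w) - norm (1 - w)\<bar> \<le> norm ((1 - of_real r * w) - (1 - w))"
    by (rule norm_triangle_ineq3)
  also have "norm ((1 - of_real r * w) - (1 - w)) = norm (of_real (1 - r) * w)"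
    by (simp add: algebra_simps)
  also have "\<dots> = 1 - r"
    using assms by (simp only: norm_mult norm_of_real) simp
  finally have close: "\<bar>norm (1 - of_real r * w) - norm (1 - w)\<bar> \<le> 1 - r" .
  then have lower: "min (norm (1 - of_real r * w)) (norm (1 - w)) \<ge> d / 2"
    using assms(3,6) by (simp add: abs_le_iff)
  have "\<bar>ln (norm (1 - of_real r * w)) - ln (norm (1 - w))\<bar>
          \<le> \<bar>norm (1 - of_real r * w) - norm (1 - w)\<bar> / min (norm (1 - of_real r * w)) (norm (1 - w))"
    using lower assms(2) by (intro abs_ln_diff_le) auto
  also have "\<dots> \<le> (1 - r) / (d / 2)"
    using close lower assms(2) by (intro frac_le) auto
  finally show ?thesis by (simp add: mult.commute)
qed

lemma uniform_limit_ln_norm_one_minus_rcis: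
  assumes d: "d > 0" "\<And>x. x \<in> S \<Longrightarrow> d \<le> cmod (1 - cis (t x))"
    and r: "r \<longlonglongrightarrow> 1" "\<And>n. 0 \<le> r n" "\<And>n. r n \<le> 1"
  shows "uniform_limit S (\<lambda>n x. ln (cmod (1 - rcis (r n) (t x)))) (\<lambda>x. ln (cmod (1 - cis (t x)))) sequentially"
proof (rule uniform_limitI)
  fix e :: real
  assume "e > 0"
  have "(\<lambda>n. 1 - r n) \<longlonglongrightarrow> 1 - 1"
    by (intro tendsto_intros r(1))
  then have "\<forall>\<^sub>F n in sequentially. 1 - r n < min (d / 2) (e * d / 2)"
    using d(1) \<open>e > 0\<close> by (intro order_tendstoD(2)) auto
  then show "\<forall>\<^sub>F n in sequentially. \<forall>x\<in>S.
               dist (ln (cmod (1 - rcis (r n) (t x)))) (ln (cmod (1 - cis (t x)))) < e"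
  proof eventually_elim
    case (elim n)
    show ?case
    proof
      fix x
      assume "x \<in> S"
      have "\<bar>ln (cmod (1 - rcis (r n) (t x))) - ln (cmod (1 - cis (t x)))\<bar> \<le> 2 * (1 - r n) / d"
        unfolding rcis_def using elim d(1) d(2)[OF \<open>x \<in> S\<close>] r(2,3)
        by (intro abs_ln_norm_one_minus_mult_le) simp_all
      also have "\<dots> < 2 * (e * d / 2) / d"
        using elim d by (intro divide_strict_right_mono mult_strict_left_mono) auto
      finally show "dist (ln (cmod (1 - rcis (r n) (t x)))) (ln (cmod (1 - cis (t x)))) < e"
        using d by (simp add: dist_real_def)
    qed
  qed
qed

lemma ln_sin_product_sums:
  assumes "0 < y" "y < 1"
  shows "(\<lambda>k. ln (1 - y\<^sup>2 / (real (Suc k))\<^sup>2)) sums ln (sin (pi * y) / (pi * y))"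
proof -
  have pos: "1 - y\<^sup>2 / (real k)\<^sup>2 > 0" if "k \<ge> 1" for k :: nat
  proof -
    have "y\<^sup>2 < 1"
      using assms by (simp add: power_less_one_iff abs_less_iff)
    also have "1 \<le> (real k)\<^sup>2"
      using that by simp
    finally show ?thesis
      using that by (simp add: field_simps)
  qed
  have "(\<lambda>n. \<Prod>k=1..n. 1 - y\<^sup>2 / (real k)\<^sup>2) \<longlonglongrightarrow> sin (pi * y) / (pi * y)"
    using sin_product_formula_real'[of y] assms by simp
  then have "(\<lambda>n. ln (\<Prod>k=1..n. 1 - y\<^sup>2 / (real k)\<^sup>2)) \<longlonglongrightarrow> ln (sin (pi * y) / (pi * y))"
    using assms sin_gt_zero[of "pi * y"] by (intro tendsto_ln) auto
  moreover have "ln (\<Prod>k=1..n. 1 - y\<^sup>2 / (real k)\<^sup>2) = (\<Sum>k<n. ln (1 - y\<^sup>2 / (real (Suc k))\<^sup>2))" for n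
  proof -
    have "ln (\<Prod>k=1..n. 1 - y\<^sup>2 / (real k)\<^sup>2) = (\<Sum>k=1..n. ln (1 - y\<^sup>2 / (real k)\<^sup>2))"
      by (rule ln_prod) (use pos in force)+
    then show ?thesis
      by (simp add: sum.atLeast1_atMost_eq)
  qed
  ultimately show ?thesis
    by (simp add: sums_def)
qed

lemma log_sine_series:
  assumes "0 < y" "y < 1"
  shows "(\<lambda>k. zeta (2 * real (Suc k)) * y ^ (2 * Suc k) / real (Suc k)) sums ln (pi * y / sin (pi * y))"
proof -
  define f where "f m k = (y\<^sup>2 / (real (Suc m))\<^sup>2) ^ Suc k / real (Suc k)" for m k
  have "y\<^sup>2 / (real (Suc m))\<^sup>2 < 1" for m
  proof -
    have "y\<^sup>2 < 1"
      using assms by (simp add: power_less_one_iff abs_less_iff)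
    also have "1 \<le> (real (Suc m))\<^sup>2"
      by simp
    finally show ?thesis
      by (simp add: field_simps)
  qed
  then have rows: "(\<lambda>k. f m k) sums - ln (1 - y\<^sup>2 / (real (Suc m))\<^sup>2)" for m
    unfolding f_def by (intro ln_one_minus_sums) auto
  have cols: "(\<lambda>m. f m k) sums (zeta (2 * real (Suc k)) * y ^ (2 * Suc k) / real (Suc k))" for k
  proof -
    have "f m k = 1 / real (Suc m) ^ (2 * Suc k) * (y ^ (2 * Suc k) / real (Suc k))" for m
    proof -
      have "(y\<^sup>2 / (real (Suc m))\<^sup>2) ^ Suc k = y ^ (2 * Suc k) / real (Suc m) ^ (2 * Suc k)"
        by (simp only: power_divide power_mult)
      then show ?thesis
        unfolding f_def by simp
    qed
    then show ?thesis
      using sums_mult2[OF zeta_of_nat_sums[of "2 * Suc k"], of "y ^ (2 * Suc k) / real (Suc k)"] by simp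
  qed
  have "(\<lambda>k. zeta (2 * real (Suc k)) * y ^ (2 * Suc k) / real (Suc k)) sums - ln (sin (pi * y) / (pi * y))"
    by (rule sums_swap_nonneg[OF _ rows sums_minus[OF ln_sin_product_sums[OF assms]] cols]) (simp add: f_def)
  moreover have "- ln (sin (pi * y) / (pi * y)) = ln (pi * y / sin (pi * y))"
    using assms sin_gt_zero[of "pi * y"] by (simp add: ln_div)
  ultimately show ?thesis
    by simp
qed

section \<open>Clausen-type Fourier series\<close>

text \<open>
  The phase \<open>a = 0\<close> gives the cosine series and \<open>a = \<pi>/2\<close> the sine series; differentiating
  in \<open>y\<close> multiplies the \<open>k\<close>-th term by \<open>2\<pi>k\<close> and lowers the phase by \<open>\<pi>/2\<close>.
\<close>
definition clausen :: "nat \<Rightarrow> real \<Rightarrow> real \<Rightarrow> real" where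
  "clausen j a y = (\<Sum>k. cos (2 * pi * real (Suc k) * y - a) / real (Suc k) ^ j)"

lemma continuous_on_clausen:
  assumes "j \<ge> 2"
  shows "continuous_on UNIV (clausen j a)"
proof -
  have "uniform_limit UNIV (\<lambda>n y. \<Sum>k<n. cos (2 * pi * real (Suc k) * y - a) / real (Suc k) ^ j)
          (clausen j a) sequentially"
    unfolding clausen_def[abs_def]
    by (rule Weierstrass_m_test[OF _ summable_inverse_Suc_power[OF assms]])
       (auto simp: abs_cos_le_one divide_right_mono)
  then show ?thesis
    by (rule uniform_limit_theorem[rotated]) (auto intro!: always_eventually continuous_intros)
qed

lemma clausen_of_int:
  assumes "j \<ge> 2"
  shows "clausen j a (of_int n) = cos a * zeta (real j)"
proof -
  have "cos (2 * pi * real (Suc k) * of_int n - a) = cos a" for k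
    using cos_int_2pin[of "int (Suc k) * n"] sin_int_2pin[of "int (Suc k) * n"]
    by (simp add: cos_diff mult.assoc)
  then show ?thesis
    unfolding clausen_def using sums_mult[OF zeta_of_nat_sums[OF assms], of "cos a"]
    by (simp add: sums_iff)
qed

lemma has_real_derivative_clausen:
  assumes "j \<ge> 3"
  shows "(clausen j a has_real_derivative 2 * pi * clausen (j - 1) (a - pi / 2) y) (at y)"
proof -
  define f' where "f' k y = 2 * pi * (cos (2 * pi * real (Suc k) * y - (a - pi / 2)) / real (Suc k) ^ (j - 1))" for k y
  have "((\<lambda>y. cos (2 * pi * real (Suc k) * y - a) / real (Suc k) ^ j) has_real_derivative f' k y) (at y)" for k y
  proof -
    define s where "s = real (Suc k)"
    have s: "s ^ j = s * s ^ (j - 1)" "s > 0"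
      using assms by (simp_all add: s_def flip: power_Suc)
    then have "((\<lambda>y. cos (2 * pi * s * y - a) / s ^ j) has_real_derivative - sin (2 * pi * s * y - a) * (2 * pi * s) / s ^ j) (at y)"
      by (auto intro!: derivative_eq_intros)
    moreover have "cos (2 * pi * s * y - (a - pi / 2)) = - sin (2 * pi * s * y - a)"
      by (simp add: minus_sin_cos_eq algebra_simps)
    ultimately show ?thesis
      unfolding f'_def s_def[symmetric] using s by (simp add: mult_ac)
  qed
  moreover have "\<bar>f' k y\<bar> \<le> 2 * pi * (1 / real (Suc k) ^ (j - 1))" for k y
    unfolding f'_def by (auto simp: abs_mult abs_cos_le_one divide_right_mono)
  moreover have "summable (\<lambda>k. 2 * pi * (1 / real (Suc k) ^ (j - 1)))"
    using assms by (intro summable_mult summable_inverse_Suc_power) auto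
  moreover have "summable (\<lambda>k. cos (2 * pi * real (Suc k) * 0 - a) / real (Suc k) ^ j)"
    using assms summable_mult[OF summable_inverse_Suc_power, of j "cos a"] by simp
  ultimately have "(clausen j a has_real_derivative (\<Sum>k. f' k y)) (at y)"
    unfolding clausen_def[abs_def] by (rule has_real_derivative_suminf)
  moreover have "(\<Sum>k. f' k y) = 2 * pi * clausen (j - 1) (a - pi / 2) y"
    unfolding f'_def clausen_def
    by (rule suminf_mult, rule summable_comparison_test[OF _ summable_inverse_Suc_power[of "j - 1"]])
       (use assms in \<open>auto simp: abs_cos_le_one divide_right_mono\<close>)
  ultimately show ?thesis
    by simp
qed

definition clausen_abel :: "real \<Rightarrow> real \<Rightarrow> real" where
  "clausen_abel r y = (\<Sum>k. r ^ Suc k * sin (2 * pi * real (Suc k) * y) / real (Suc k) ^ 2)"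

lemma clausen_abel_1: "clausen_abel 1 y = clausen 2 (pi / 2) y"
  unfolding clausen_abel_def clausen_def by (simp add: cos_diff)

lemma continuous_on_clausen_abel: "continuous_on {0..1} (\<lambda>r. clausen_abel r y)"
proof -
  have "uniform_limit {0..1}
          (\<lambda>n r. \<Sum>k<n. r ^ Suc k * sin (2 * pi * real (Suc k) * y) / real (Suc k) ^ 2)
          (\<lambda>r. clausen_abel r y) sequentially"
    unfolding clausen_abel_def
  proof (rule Weierstrass_m_test[OF _ summable_inverse_Suc_power[of 2]])
    fix k and r :: real
    assume "r \<in> {0..1}"
    then have "\<bar>r\<bar> ^ Suc k * \<bar>sin (2 * pi * real (Suc k) * y)\<bar> \<le> 1 * 1"
      by (intro mult_mono power_le_one) (auto simp: abs_sin_le_one)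
    then show "norm (r ^ Suc k * sin (2 * pi * real (Suc k) * y) / real (Suc k) ^ 2) \<le> 1 / real (Suc k) ^ 2"
      by (simp add: abs_mult power_abs divide_right_mono del: of_nat_Suc)
  qed simp
  then show ?thesis
    by (rule uniform_limit_theorem[rotated]) (auto intro!: always_eventually continuous_intros)
qed

lemma has_real_derivative_clausen_abel:
  assumes "0 \<le> r" "r < 1"
  shows "(clausen_abel r has_real_derivative - 2 * pi * ln (cmod (1 - rcis r (2 * pi * y)))) (at y)"
proof -
  define f' where "f' k y = 2 * pi * (r ^ Suc k * cos (real (Suc k) * (2 * pi * y)) / real (Suc k))" for k y
  have "((\<lambda>y. r ^ Suc k * sin (2 * pi * real (Suc k) * y) / real (Suc k) ^ 2) has_real_derivative f' k y) (at y)"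
    for k y
  proof -
    define s where "s = real (Suc k)"
    define c where "c = r ^ Suc k / s ^ 2"
    have "((\<lambda>y. c * sin (2 * pi * s * y)) has_real_derivative c * (cos (2 * pi * s * y) * (2 * pi * s))) (at y)"
      by (auto intro!: derivative_eq_intros)
    moreover have "c * (cos (2 * pi * s * y) * (2 * pi * s)) = f' k y"
      unfolding f'_def c_def s_def by (simp add: power2_eq_square field_simps mult_ac del: of_nat_Suc)
    ultimately show ?thesis
      unfolding c_def s_def by simp
  qed
  moreover have "\<bar>f' k y\<bar> \<le> 2 * pi * r ^ Suc k" for k y
  proof -
    have "r ^ Suc k * \<bar>cos (real (Suc k) * (2 * pi * y))\<bar> / real (Suc k) \<le> r ^ Suc k * 1 / 1"
      using assms by (intro frac_le mult_left_mono) (auto simp: abs_cos_le_one)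
    then have "2 * pi * (r ^ Suc k * \<bar>cos (real (Suc k) * (2 * pi * y))\<bar> / real (Suc k)) \<le> 2 * pi * r ^ Suc k"
      by (intro mult_left_mono) auto
    then show ?thesis
      unfolding f'_def using assms by (simp add: abs_mult)
  qed
  moreover have "summable (\<lambda>k. 2 * pi * r ^ Suc k)"
    using assms by (intro summable_mult) (simp add: summable_geometric)
  ultimately have "(clausen_abel r has_real_derivative (\<Sum>k. f' k y)) (at y)"
    unfolding clausen_abel_def[abs_def] by (rule has_real_derivative_suminf) simp
  moreover have "(\<lambda>k. f' k y) sums (2 * pi * - ln (cmod (1 - rcis r (2 * pi * y))))"
    unfolding f'_def by (intro sums_mult cos_series_sums_ln_norm assms)
  ultimately show ?thesis
    by (simp add: sums_iff)
qed

lemma norm_one_minus_cis_lower_bound: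
  assumes "compact S" "S \<subseteq> {0<..<1}"
  obtains d where "d > 0" "\<And>x. x \<in> S \<Longrightarrow> d \<le> cmod (1 - cis (2 * pi * x))"
proof (cases "S = {}")
  case False
  have "continuous_on S (\<lambda>x. cmod (1 - cis (2 * pi * x)))"
    by (intro continuous_intros)
  then obtain x0 where x0: "x0 \<in> S" "\<And>x. x \<in> S \<Longrightarrow> cmod (1 - cis (2 * pi * x0)) \<le> cmod (1 - cis (2 * pi * x))"
    using continuous_attains_inf[OF assms(1) False] by blast
  have "0 < sin (pi * x0)"
    using x0(1) assms(2) by (intro sin_gt_zero) auto
  then have "cmod (1 - cis (2 * pi * x0)) > 0"
    using norm_one_minus_cis_double[of "pi * x0"] by (simp add: mult.assoc)
  with x0 that show ?thesis
    by blast
next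
  case True
  show ?thesis
    by (rule that[of 1]) (simp_all add: True)
qed

text \<open>
  The termwise derivative of \<^term>\<open>clausen 2 (pi / 2)\<close> is the conditionally convergent
  series \<open>2\<pi> \<Sum>k. cos (2\<pi>ky) / k\<close>, so we differentiate the Abel means instead and let \<open>r \<rightarrow> 1\<close>:
  their derivatives converge uniformly on compact subintervals of \<open>(0, 1)\<close>.
\<close>
lemma has_real_derivative_clausen_2_pi_half:
  assumes "0 < y" "y < 1"
  shows "(clausen 2 (pi / 2) has_real_derivative - 2 * pi * ln (2 * sin (pi * y))) (at y)"
proof -
  define S where "S = {y / 2 .. (1 + y) / 2}"
  have y: "y \<in> interior S"
    using assms by (simp add: S_def)
  have "compact S" "S \<subseteq> {0<..<1}"
    using assms by (auto simp: S_def)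
  then obtain d where d: "d > 0" "\<And>x. x \<in> S \<Longrightarrow> d \<le> cmod (1 - cis (2 * pi * x))"
    using norm_one_minus_cis_lower_bound by blast
  define r where "r n = 1 - inverse (real (Suc n))" for n
  have r: "0 \<le> r n" "r n < 1" for n
    by (simp_all add: r_def inverse_le_1_iff)
  have r_01: "r n \<in> {0..1}" for n
    using r[of n] by simp
  have "r \<longlonglongrightarrow> 1 - 0"
    unfolding r_def by (intro tendsto_intros LIMSEQ_inverse_real_of_nat)
  then have "r \<longlonglongrightarrow> 1"
    by simp
  have "uniform_limit S (\<lambda>n x. ln (cmod (1 - rcis (r n) (2 * pi * x))))
          (\<lambda>x. ln (cmod (1 - cis (2 * pi * x)))) sequentially"
    by (rule uniform_limit_ln_norm_one_minus_rcis[OF d \<open>r \<longlonglongrightarrow> 1\<close>]) (use r_01 in simp_all)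
  then have unif: "uniform_limit S (\<lambda>n x. - 2 * pi * ln (cmod (1 - rcis (r n) (2 * pi * x))))
                     (\<lambda>x. - 2 * pi * ln (cmod (1 - cis (2 * pi * x)))) sequentially"
    by (rule uniform_limit_intros)
  have lim: "(\<lambda>n. clausen_abel (r n) x) \<longlonglongrightarrow> clausen 2 (pi / 2) x" for x
    unfolding clausen_abel_1[symmetric]
    by (rule continuous_on_tendsto_compose[OF continuous_on_clausen_abel \<open>r \<longlonglongrightarrow> 1\<close>])
       (use r_01 in \<open>simp_all add: always_eventually\<close>)
  have "(clausen 2 (pi / 2) has_field_derivative - 2 * pi * ln (cmod (1 - cis (2 * pi * y)))) (at y within S)"
  proof (rule has_field_derivative_uniform_limit[OF _ _ unif lim])
    show "convex S"
      by (simp add: S_def)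
    show "y \<in> S"
      using y interior_subset by blast
    show "(clausen_abel (r n) has_field_derivative - 2 * pi * ln (cmod (1 - rcis (r n) (2 * pi * x)))) (at x within S)"
      for n x
      by (rule has_field_derivative_at_within[OF has_real_derivative_clausen_abel[OF r]])
  qed
  moreover have "cmod (1 - cis (2 * pi * y)) = 2 * sin (pi * y)"
    using norm_one_minus_cis_double[of "pi * y"] assms sin_gt_zero[of "pi * y"] by (simp add: mult.assoc)
  ultimately show ?thesis
    unfolding at_within_interior[OF y] by (simp only:)
qed

section \<open>Moments of the log-sine function\<close>

text \<open>
  For \<open>i > 0\<close> this is the 1-periodic \<open>i\<close>-th primitive of \<open>ln (2 sin (\<pi>y))\<close> on \<open>(0, 1)\<close>.
  At \<open>i = 0\<close> the same formula would be the Fourier series \<open>- \<Sum>k. cos (2\<pi>ky) / k\<close> of the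
  logarithm, which converges only conditionally.
\<close>
definition log_sine_prim :: "nat \<Rightarrow> real \<Rightarrow> real" where
  "log_sine_prim i y =
     (if i = 0 then ln (2 * sin (pi * y)) else - clausen (Suc i) (real i * pi / 2) y / (2 * pi) ^ i)"

lemma has_real_derivative_log_sine_prim:
  assumes "0 < y" "y < 1"
  shows "(log_sine_prim (Suc i) has_real_derivative log_sine_prim i y) (at y)"
proof (cases i)
  case 0
  have "log_sine_prim (Suc 0) = (\<lambda>y. - clausen 2 (pi / 2) y / (2 * pi))"
    by (simp add: log_sine_prim_def fun_eq_iff numeral_2_eq_2)
  moreover have "((\<lambda>y. - clausen 2 (pi / 2) y / (2 * pi)) has_real_derivative
                   - (- 2 * pi * ln (2 * sin (pi * y))) / (2 * pi)) (at y)"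
    by (intro DERIV_cdivide DERIV_minus has_real_derivative_clausen_2_pi_half assms)
  ultimately show ?thesis
    using 0 by (simp add: log_sine_prim_def)
next
  case (Suc p)
  have angle: "real (Suc i) * pi / 2 - pi / 2 = real i * pi / 2"
    by (simp add: field_simps)
  have "log_sine_prim (Suc i) = (\<lambda>y. - clausen (Suc (Suc i)) (real (Suc i) * pi / 2) y / (2 * pi) ^ Suc i)"
    by (rule ext) (simp only: log_sine_prim_def nat.distinct if_False)
  moreover have "log_sine_prim i y =
          - (2 * pi * clausen (Suc (Suc i) - 1) (real (Suc i) * pi / 2 - pi / 2) y) / (2 * pi) ^ Suc i"
    unfolding angle using Suc by (simp add: log_sine_prim_def)
  ultimately show ?thesis
    by (simp only:) (intro DERIV_cdivide DERIV_minus has_real_derivative_clausen, simp add: Suc)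
qed

lemma continuous_on_log_sine_prim: "continuous_on UNIV (log_sine_prim (Suc i))"
  unfolding log_sine_prim_def
  by (auto intro!: continuous_intros continuous_on_compose2[OF continuous_on_clausen])

lemma log_sine_prim_of_int:
  "log_sine_prim (Suc i) (of_int n) = - cos (real (Suc i) * pi / 2) * zeta (real (Suc (Suc i))) / (2 * pi) ^ Suc i"
  by (simp add: log_sine_prim_def clausen_of_int del: of_nat_Suc)

fun log_sine_moment_prim :: "nat \<Rightarrow> nat \<Rightarrow> real \<Rightarrow> real" where
  "log_sine_moment_prim 0 i y = log_sine_prim (Suc i) y"
| "log_sine_moment_prim (Suc m) i y =
     y ^ Suc m * log_sine_prim (Suc i) y - real (Suc m) * log_sine_moment_prim m (Suc i) y"

lemma has_real_derivative_log_sine_moment_prim: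
  assumes "0 < y" "y < 1"
  shows "(log_sine_moment_prim m i has_real_derivative y ^ m * log_sine_prim i y) (at y)"
proof (induction m arbitrary: i)
  case 0
  show ?case
    using has_real_derivative_log_sine_prim[OF assms] by simp
next
  case (Suc m)
  have "((\<lambda>y. y ^ Suc m * log_sine_prim (Suc i) y - real (Suc m) * log_sine_moment_prim m (Suc i) y)
          has_real_derivative
          (real (Suc m) * y ^ m * log_sine_prim (Suc i) y + log_sine_prim i y * y ^ Suc m)
            - real (Suc m) * (y ^ m * log_sine_prim (Suc i) y)) (at y)"
    using DERIV_pow[of "Suc m" y]
    by (intro DERIV_diff DERIV_mult DERIV_cmult Suc.IH has_real_derivative_log_sine_prim assms) simp
  then show ?case
    by (simp add: algebra_simps)
qed

lemma continuous_on_log_sine_moment_prim: "continuous_on UNIV (log_sine_moment_prim m i)"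
proof (induction m arbitrary: i)
  case 0
  show ?case
    using continuous_on_log_sine_prim by simp
next
  case (Suc m)
  show ?case
    by (simp only: log_sine_moment_prim.simps)
       (intro continuous_intros continuous_on_compose2[OF continuous_on_log_sine_prim]
          continuous_on_compose2[OF Suc.IH], auto)
qed

lemma log_sine_moment_prim_diff_eq_sum:
  "log_sine_moment_prim m i 1 - log_sine_moment_prim m i 0 =
     (\<Sum>l<m. (-1) ^ l * (fact m / fact (m - l)) * log_sine_prim (i + l + 1) 1)"
proof (induction m arbitrary: i)
  case 0
  show ?case
    using log_sine_prim_of_int[of i 0] log_sine_prim_of_int[of i 1] by simp
next
  case (Suc m)
  have "log_sine_moment_prim (Suc m) i 1 - log_sine_moment_prim (Suc m) i 0
          = log_sine_prim (Suc i) 1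
            - real (Suc m) * (log_sine_moment_prim m (Suc i) 1 - log_sine_moment_prim m (Suc i) 0)"
    by (simp add: algebra_simps)
  also have "\<dots> = log_sine_prim (Suc i) 1
     + (\<Sum>l<m. - (real (Suc m) * ((-1) ^ l * (fact m / fact (m - l)) * log_sine_prim (Suc i + l + 1) 1)))"
    unfolding Suc.IH by (simp add: sum_distrib_left sum_negf)
  also have "\<dots> = log_sine_prim (Suc i) 1
     + (\<Sum>l<m. (-1) ^ Suc l * (fact (Suc m) / fact (Suc m - Suc l)) * log_sine_prim (i + Suc l + 1) 1)"
    by (intro arg_cong[where f = "(+) _"] sum.cong) (simp_all add: fact_Suc field_simps)
  also have "\<dots> = (\<Sum>l<Suc m. (-1) ^ l * (fact (Suc m) / fact (Suc m - l)) * log_sine_prim (i + l + 1) 1)"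
    by (subst sum.lessThan_Suc_shift) simp
  finally show ?case .
qed

lemma sum_cos_Suc_pi_half_mult:
  fixes h :: "nat \<Rightarrow> real"
  shows "(\<Sum>l<m. cos (real (Suc l) * pi / 2) * h l) = (\<Sum>j=1..m div 2. (-1) ^ j * h (2 * j - 1))"
proof (induction m)
  case 0
  show ?case by simp
next
  case (Suc m)
  show ?case
  proof (cases "even m")
    case True
    then have "cos (real (Suc m) * (pi / 2)) = 0"
      by (intro cos_zero_iff[THEN iffD2] disjI1 exI[of _ "Suc m"]) simp
    with True show ?thesis
      using Suc.IH by simp
  next
    case False
    then obtain p where m: "m = 2 * p + 1"
      using oddE by blast
    have "real (Suc m) * pi / 2 = real (Suc p) * pi"
      by (simp add: m algebra_simps)
    then have "cos (real (Suc m) * pi / 2) = (-1) ^ Suc p"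
      by (simp only: cos_npi)
    moreover have "Suc m div 2 = Suc (m div 2)" "m div 2 = p"
      using m by simp_all
    ultimately show ?thesis
      using Suc.IH by (simp add: m)
  qed
qed

lemma log_sine_moment_prim_diff_eq_zeta:
  "log_sine_moment_prim m 0 1 - log_sine_moment_prim m 0 0 =
     fact m * (\<Sum>j=1..m div 2. (-1) ^ j * zeta (2 * real j + 1) / ((2 * pi) ^ (2 * j) * fact (m + 1 - 2 * j)))"
proof -
  define h where "h l = - ((-1) ^ l * (fact m / fact (m - l)) * zeta (real (Suc (Suc l))) / (2 * pi) ^ Suc l)" for l
  have "log_sine_moment_prim m 0 1 - log_sine_moment_prim m 0 0 = (\<Sum>l<m. cos (real (Suc l) * pi / 2) * h l)"
    unfolding log_sine_moment_prim_diff_eq_sum h_def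
    by (intro sum.cong) (simp_all add: log_sine_prim_of_int[of _ 1, simplified])
  also have "\<dots> = (\<Sum>j=1..m div 2. (-1) ^ j * h (2 * j - 1))"
    by (rule sum_cos_Suc_pi_half_mult)
  also have "\<dots> = (\<Sum>j=1..m div 2. fact m * ((-1) ^ j * zeta (2 * real j + 1) / ((2 * pi) ^ (2 * j) * fact (m + 1 - 2 * j))))"
  proof (rule sum.cong)
    fix j assume j: "j \<in> {1..m div 2}"
    then have "Suc (2 * j - 1) = 2 * j" "m - (2 * j - 1) = m + 1 - 2 * j" "(-1::real) ^ (2 * j - 1) = -1"
      by (auto simp: power_minus_odd)
    then show "(-1) ^ j * h (2 * j - 1) = fact m * ((-1) ^ j * zeta (2 * real j + 1) / ((2 * pi) ^ (2 * j) * fact (m + 1 - 2 * j)))"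
      unfolding h_def by (simp add: add.commute mult_ac)
  qed simp
  finally show ?thesis
    by (simp add: sum_distrib_left)
qed

lemma has_integral_pow_mult_ln_2_sin:
  "((\<lambda>y. y ^ m * ln (2 * sin (pi * y))) has_integral
      fact m * (\<Sum>j=1..m div 2. (-1) ^ j * zeta (2 * real j + 1) / ((2 * pi) ^ (2 * j) * fact (m + 1 - 2 * j))))
    {0..1}"
proof -
  have "((\<lambda>y. y ^ m * log_sine_prim 0 y) has_integral
          log_sine_moment_prim m 0 1 - log_sine_moment_prim m 0 0) {0..1}"
    by (rule fundamental_theorem_of_calculus_interior)
       (auto intro!: has_real_derivative_log_sine_moment_prim continuous_on_subset[OF continuous_on_log_sine_moment_prim]
             simp flip: has_real_derivative_iff_has_vector_derivative)
  then show ?thesis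
    unfolding log_sine_moment_prim_diff_eq_zeta by (simp add: log_sine_prim_def)
qed

lemma continuous_on_pow_Suc_mult_ln:
  fixes c :: real
  assumes "c > 0"
  shows "continuous_on {0..1} (\<lambda>y. y ^ Suc m * ln (c * y))"
proof (rule continuous_on_eq_continuous_within[THEN iffD2], intro ballI)
  fix x :: real
  assume x: "x \<in> {0..1}"
  show "continuous (at x within {0..1}) (\<lambda>y. y ^ Suc m * ln (c * y))"
  proof (cases "x = 0")
    case True
    have "((\<lambda>y. y * ln (c * y)) \<longlongrightarrow> 0) (at_right 0)"
      using assms by real_asymp
    then have "((\<lambda>y. y ^ m * (y * ln (c * y))) \<longlongrightarrow> 0 ^ m * 0) (at_right 0)"
      by (intro tendsto_intros)
    moreover have "(\<lambda>y. y ^ Suc m * ln (c * y)) = (\<lambda>y. y ^ m * (y * ln (c * y)))"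
      by (simp add: fun_eq_iff power_Suc2 mult.assoc)
    ultimately show ?thesis
      unfolding continuous_within at_within_Icc_at_right[OF zero_less_one] True by simp
  next
    case False
    with x have "0 < x"
      by simp
    then have "isCont (\<lambda>y. y ^ Suc m * ln (c * y)) x"
      by (intro continuous_intros) (use assms in simp)
    then show ?thesis
      by (rule continuous_at_imp_continuous_within)
  qed
qed

lemma has_integral_pow_mult_ln:
  fixes c :: real
  assumes "c > 0"
  shows "((\<lambda>y. y ^ m * ln (c * y)) has_integral ln c / real (Suc m) - 1 / (real (Suc m))\<^sup>2) {0..1}"
proof -
  define E where "E y = y ^ Suc m * ln (c * y) / real (Suc m) - y ^ Suc m / (real (Suc m))\<^sup>2" for y :: real
  have "(E has_real_derivative y ^ m * ln (c * y)) (at y)" if "0 < y" for y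
  proof -
    have "((\<lambda>y. ln (c * y)) has_real_derivative 1 / y) (at y)"
      using that assms by (auto intro!: derivative_eq_intros)
    moreover have "((\<lambda>y. y ^ Suc m) has_real_derivative real (Suc m) * y ^ m) (at y)"
      using DERIV_pow[of "Suc m" y] by simp
    ultimately have "(E has_real_derivative
            (real (Suc m) * y ^ m * ln (c * y) + 1 / y * y ^ Suc m) / real (Suc m)
              - real (Suc m) * y ^ m / (real (Suc m))\<^sup>2) (at y)"
      unfolding E_def[abs_def] by (intro DERIV_diff DERIV_cdivide DERIV_mult)
    moreover have "1 / y * y ^ Suc m = y ^ m"
      using that by simp
    ultimately show ?thesis
      by (simp add: power2_eq_square field_simps del: of_nat_Suc)
  qed
  moreover have "continuous_on {0..1} E"
    unfolding E_def
    by (intro continuous_on_diff continuous_on_divide continuous_on_pow_Suc_mult_ln assms continuous_intros) auto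
  ultimately have "((\<lambda>y. y ^ m * ln (c * y)) has_integral E 1 - E 0) {0..1}"
    by (intro fundamental_theorem_of_calculus_interior)
       (auto simp flip: has_real_derivative_iff_has_vector_derivative)
  then show ?thesis
    by (simp add: E_def)
qed

definition zeta_moment_coeff :: "nat \<Rightarrow> nat \<Rightarrow> real" where
  "zeta_moment_coeff m i = zeta (2 * real (Suc i)) / (real (Suc i) * (2 * real (Suc i) + real (Suc m)))"

lemma zeta_moment_coeff_bounds:
  "\<bar>zeta_moment_coeff m i\<bar> \<le> zeta 2 * (1 / real (Suc i) ^ 2)"
  "\<bar>zeta_moment_coeff m i * real (2 * Suc i + Suc m)\<bar> \<le> zeta 2"
proof -
  have zeta: "0 \<le> zeta (2 * real (Suc i))" "zeta (2 * real (Suc i)) \<le> zeta 2"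
    using zeta_of_nat_nonneg[of "2 * Suc i"] zeta_of_nat_antimono[of 2 "2 * Suc i"] by simp_all
  have "real (Suc i) ^ 2 \<le> real (Suc i) * (2 * real (Suc i) + real (Suc m))"
    by (simp add: power2_eq_square mult_left_mono)
  then show "\<bar>zeta_moment_coeff m i\<bar> \<le> zeta 2 * (1 / real (Suc i) ^ 2)"
    using zeta unfolding zeta_moment_coeff_def by (simp add: frac_le)
  have "zeta_moment_coeff m i * real (2 * Suc i + Suc m) = zeta (2 * real (Suc i)) / real (Suc i)"
    unfolding zeta_moment_coeff_def by simp
  also have "\<dots> \<le> zeta (2 * real (Suc i))"
    using zeta by (simp add: divide_le_eq order_trans[OF _ mult_le_cancel_left1[THEN iffD2]])
  finally show "\<bar>zeta_moment_coeff m i * real (2 * Suc i + Suc m)\<bar> \<le> zeta 2"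
    using zeta unfolding zeta_moment_coeff_def by simp
qed

lemma summable_abs_zeta_moment_coeff: "summable (\<lambda>i. \<bar>zeta_moment_coeff m i\<bar>)"
  by (rule summable_comparison_test[OF _ summable_mult[OF summable_inverse_Suc_power[of 2]]])
     (use zeta_moment_coeff_bounds(1) in auto)

lemma has_integral_zeta_moment_coeff:
  "((\<lambda>y. y ^ m * ln (2 * pi * y) - y ^ m * ln (2 * sin (pi * y))) has_integral (\<Sum>i. zeta_moment_coeff m i)) {0..1}"
proof -
  define P where "P y = (\<Sum>i. zeta_moment_coeff m i * y ^ (2 * Suc i + Suc m))" for y :: real
  have "continuous_on {0..1} P"
    unfolding P_def
    by (rule continuous_on_subset[OF continuous_on_sparse_powser[OF summable_abs_zeta_moment_coeff]]) auto
  moreover have "(P has_real_derivative y ^ m * ln (2 * pi * y) - y ^ m * ln (2 * sin (pi * y))) (at y)"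
    if y: "0 < y" "y < 1" for y
  proof -
    have "(P has_real_derivative
             (\<Sum>i. zeta_moment_coeff m i * real (2 * Suc i + Suc m) * y ^ (2 * Suc i + Suc m - 1))) (at y)"
      unfolding P_def using y zeta_moment_coeff_bounds(2) by (intro has_real_derivative_sparse_powser) auto
    moreover have "zeta_moment_coeff m i * real (2 * Suc i + Suc m) * y ^ (2 * Suc i + Suc m - 1)
                     = y ^ m * (zeta (2 * real (Suc i)) * y ^ (2 * Suc i) / real (Suc i))" for i
      unfolding zeta_moment_coeff_def by (simp add: power_add)
    then have "(\<lambda>i. zeta_moment_coeff m i * real (2 * Suc i + Suc m) * y ^ (2 * Suc i + Suc m - 1))
                 sums (y ^ m * ln (pi * y / sin (pi * y)))"
      using sums_mult[OF log_sine_series[OF y], of "y ^ m"] by simp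
    moreover have "ln (pi * y / sin (pi * y)) = ln (2 * pi * y) - ln (2 * sin (pi * y))"
      using y sin_gt_zero[of "pi * y"] by (simp add: ln_div ln_mult)
    ultimately show ?thesis
      by (simp add: sums_iff right_diff_distrib)
  qed
  ultimately have "((\<lambda>y. y ^ m * ln (2 * pi * y) - y ^ m * ln (2 * sin (pi * y))) has_integral P 1 - P 0) {0..1}"
    by (intro fundamental_theorem_of_calculus_interior)
       (auto simp flip: has_real_derivative_iff_has_vector_derivative)
  then show ?thesis
    by (simp add: P_def)
qed

theorem zeta_even_series_sums:
  "(\<lambda>i. zeta (2 * real (Suc i)) / (real (Suc i) * (2 * real (Suc i) + real (Suc m))))
     sums (ln (2 * pi) / real (Suc m) - 1 / (real (Suc m))\<^sup>2
           - fact m * (\<Sum>j=1..m div 2. (-1) ^ j * zeta (2 * real j + 1) / ((2 * pi) ^ (2 * j) * fact (m + 1 - 2 * j))))"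
proof -
  have "((\<lambda>y. y ^ m * ln (2 * pi * y) - y ^ m * ln (2 * sin (pi * y))) has_integral
          (ln (2 * pi) / real (Suc m) - 1 / (real (Suc m))\<^sup>2)
          - fact m * (\<Sum>j=1..m div 2. (-1) ^ j * zeta (2 * real j + 1) / ((2 * pi) ^ (2 * j) * fact (m + 1 - 2 * j))))
        {0..1}"
    by (intro has_integral_diff has_integral_pow_mult_ln has_integral_pow_mult_ln_2_sin) simp
  from has_integral_unique[OF has_integral_zeta_moment_coeff this]
  have "(\<Sum>i. zeta_moment_coeff m i) = ln (2 * pi) / real (Suc m) - 1 / (real (Suc m))\<^sup>2
          - fact m * (\<Sum>j=1..m div 2. (-1) ^ j * zeta (2 * real j + 1) / ((2 * pi) ^ (2 * j) * fact (m + 1 - 2 * j)))" .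
  moreover have "summable (zeta_moment_coeff m)"
    using summable_abs_zeta_moment_coeff summable_rabs_cancel by blast
  ultimately show ?thesis
    unfolding zeta_moment_coeff_def[abs_def] by (simp add: sums_iff)
qed

lemma zeta_even_series_sums_k_plus_n:
  assumes "n \<ge> 1"
  shows "(\<lambda>i. let k = Suc i in zeta (2 * real k) / (real k * (real k + real n)))
           sums (- 1 / (2 * (real n)^2) + ln (2 * pi) / real n
                 - 2 * fact (2*n - 1) * (\<Sum>j = 1..n-1. (-1)^j * zeta (2 * real j + 1)
                        / ((2 * pi)^(2*j) * fact (2*n - 2*j))))"
proof -
  have m: "Suc (2 * n - 1) = 2 * n" "(2 * n - 1) div 2 = n - 1" "2 * n - 1 + 1 - 2 * j = 2 * n - 2 * j" for j
    using assms by auto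
  have series: "(\<lambda>i. 2 * (zeta (2 * real (Suc i)) / (real (Suc i) * (2 * real (Suc i) + real (2 * n)))))
          sums (2 * (ln (2 * pi) / real (2 * n) - 1 / (real (2 * n))\<^sup>2
                     - fact (2 * n - 1) * (\<Sum>j = 1..n-1. (-1)^j * zeta (2 * real j + 1) / ((2 * pi)^(2*j) * fact (2*n - 2*j)))))"
    using sums_mult[OF zeta_even_series_sums[of "2 * n - 1"], of 2] unfolding m .
  have terms: "(\<lambda>i. 2 * (zeta (2 * real (Suc i)) / (real (Suc i) * (2 * real (Suc i) + real (2 * n)))))
      = (\<lambda>i. let k = Suc i in zeta (2 * real k) / (real k * (real k + real n)))"
  proof
    fix i
    have "real (Suc i) * (2 * real (Suc i) + real (2 * n)) = 2 * (real (Suc i) * (real (Suc i) + real n))"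
      by (simp add: algebra_simps)
    then show "2 * (zeta (2 * real (Suc i)) / (real (Suc i) * (2 * real (Suc i) + real (2 * n))))
        = (let k = Suc i in zeta (2 * real k) / (real k * (real k + real n)))"
      by (simp only: Let_def) simp
  qed
  have limit: "2 * (ln (2 * pi) / real (2 * n) - 1 / (real (2 * n))\<^sup>2
                     - fact (2 * n - 1) * (\<Sum>j = 1..n-1. (-1)^j * zeta (2 * real j + 1) / ((2 * pi)^(2*j) * fact (2*n - 2*j))))
      = - 1 / (2 * (real n)^2) + ln (2 * pi) / real n
          - 2 * fact (2*n - 1) * (\<Sum>j = 1..n-1. (-1)^j * zeta (2 * real j + 1) / ((2 * pi)^(2*j) * fact (2*n - 2*j)))"
    using assms by (simp add: field_simps power2_eq_square)
  from series show ?thesis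
    unfolding terms limit .
qed

lemma zeta_even_series_sums_2k_plus_2n_minus_1:
  assumes "n \<ge> 1"
  shows "(\<lambda>i. let k = Suc i in zeta (2 * real k) / (real k * (2 * real k + 2 * real n - 1)))
           sums (- 1 / (2 * real n - 1)^2 + ln (2 * pi) / (2 * real n - 1)
                 - fact (2*n - 2) * (\<Sum>j = 1..n-1. (-1)^j * zeta (2 * real j + 1)
                        / ((2 * pi)^(2*j) * fact (2*n - 2*j - 1))))"
proof -
  have m: "real (Suc (2 * n - 2)) = 2 * real n - 1" "(2 * n - 2) div 2 = n - 1"
    "2 * n - 2 + 1 - 2 * j = 2 * n - 2 * j - 1" for j
    using assms by auto
  have "2 * real (Suc i) + (2 * real n - 1) = 2 * real (Suc i) + 2 * real n - 1" for i
    by simp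
  with zeta_even_series_sums[of "2 * n - 2"] show ?thesis
    unfolding m Let_def by simp
qed

theorem corollary5:
  fixes n :: nat
  assumes "n \<ge> 1"
  shows "(\<lambda>i. let k = Suc i in zeta (2 * real k) / (real k * (real k + real n)))
           sums (- 1 / (2 * (real n)^2) + ln (2 * pi) / real n
                 - 2 * fact (2*n - 1) * (\<Sum>j = 1..n-1. (-1)^j * zeta (2 * real j + 1)
                        / ((2 * pi)^(2*j) * fact (2*n - 2*j))))
     \<and> (\<lambda>i. let k = Suc i in zeta (2 * real k) / (real k * (2 * real k + 2 * real n - 1)))
           sums (- 1 / (2 * real n - 1)^2 + ln (2 * pi) / (2 * real n - 1)
                 - fact (2*n - 2) * (\<Sum>j = 1..n-1. (-1)^j * zeta (2 * real j + 1)
                        / ((2 * pi)^(2*j) * fact (2*n - 2*j - 1))))"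
  using zeta_even_series_sums_k_plus_n[OF assms] zeta_even_series_sums_2k_plus_2n_minus_1[OF assms]
  by blast

end
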